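(* Under the standing setup, assume that $f$ is bounded, i.e. $\sup_{q\in\mathcal P}\|f_q\|_\infty<\infty$. Then for all $t\ge0$ and $u_0\in\mathbb R^d$, $\|\mathscr S(t)u_0-u_0\|_\infty\le t\sup_{q\in\mathcal P}\|qu_0+f_q\|_\infty,$ and for all $s,t\ge0$, $\|\mathscr S(t)u_0-\mathscr S(s)u_0\|_\infty\le|t-s|\sup_{q\in\mathcal P}\|qu_0+f_q\|_\infty$. In particular $t\mapsto\mathscr S(t)u_0$ is Lipschitz continuous.
   Context: Standing setup: $d\in\mathbb N$; vectors in $\mathbb R^d$ with $\|u\|_\infty=\max_i|u_i|$; inequalities and suprema of vectors are componentwise; reals are identified with constant vectors. A $Q$-matrix is $q\in\mathbb R^{d\times d}$ with $q_{ii}\le0$, $q_{ij}\ge0$ ($i\ne j$), $\sum_jq_{ij}=0$. Let $\mathcal P$ be a set of $Q$-matrices and $f=(f_q)_{q\in\mathcal P}\subset\mathbb R^d$ with $\sup_{q\in\mathcal P}f_q=f_{q_0}=0$ for some $q_0\in\mathcal P$, such that $\mathcal Qu:=\sup_{q\in\mathcal P}(qu+f_q)$ is finite for every $u\in\mathbb R^d$. For $q\in\mathcal P$, $t\ge0$: $S_q(t)u_0:=e^{tq}u_0+\int_0^te^{sq}f_q\,ds$. For $h\ge0$: $\mathcal E_hu_0:=\sup_{q\in\mathcal P}S_q(h)u_0$. $P$ is the set of finite subsets $\pi\subset[0,\infty)$ with $0\in\pi$; $P_t:=\{\pi\in P:\max\pi=t\}$. For $\pi=\{t_0,\dots,t_m\}$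 with $0=t_0<\dots<t_m$, $m\ge1$, $\mathcal E_\pi:=\mathcal E_{t_1-t_0}\circ\cdots\circ\mathcal E_{t_m-t_{m-1}}$, and $\mathcal E_{\{0\}}:=\mathcal E_0$. The Nisio semigroup of $(\mathcal P,f)$ is $\mathscr S(t)u_0:=\sup_{\pi\in P_t}\mathcal E_\pi u_0$ for $t\ge0$, $u_0\in\mathbb R^d$. *)

theory Defs
  imports "HOL-Analysis.Analysis"
begin

definition is_Q_matrix :: "real^'n^'n \<Rightarrow> bool" where
  "is_Q_matrix q \<longleftrightarrow> (\<forall>i. q$i$i \<le> 0) \<and> (\<forall>i j. i \<noteq> j \<longrightarrow> q$i$j \<ge> 0)
      \<and> (\<forall>i. (\<Sum>j\<in>UNIV. q$i$j) = 0)"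

definition mpow :: "real^'n^'n \<Rightarrow> nat \<Rightarrow> real^'n^'n" where
  "mpow A k = (((**) A) ^^ k) (mat 1)"

definition mexp :: "real^'n^'n \<Rightarrow> real^'n^'n" where
  "mexp A = (\<Sum>k. (1 / (fact k :: real)) *\<^sub>R mpow A k)"

definition supnorm :: "real^'n \<Rightarrow> real" where
  "supnorm u = Max (range (\<lambda>i. \<bar>u$i\<bar>))"

definition Ssol :: "real^'n^'n \<Rightarrow> real^'n \<Rightarrow> real \<Rightarrow> real^'n \<Rightarrow> real^'n" where
  "Ssol q fq t u0 = mexp (t *\<^sub>R q) *v u0 + integral {0..t} (\<lambda>s. mexp (s *\<^sub>R q) *v fq)"

definition Eop :: "(real^'n^'n) set \<Rightarrow> (real^'n^'n \<Rightarrow> real^'n) \<Rightarrow> real \<Rightarrow> real^'n \<Rightarrow> real^'n" where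
  "Eop P f h u0 = (\<chi> i. SUP q\<in>P. (Ssol q (f q) h u0) $ i)"

definition partitions :: "real \<Rightarrow> real set set" where
  "partitions t = {\<pi>. finite \<pi> \<and> \<pi> \<subseteq> {0..} \<and> 0 \<in> \<pi> \<and> Max \<pi> = t}"

definition increments :: "real set \<Rightarrow> real list" where
  "increments \<pi> = (let xs = sorted_list_of_set \<pi> in map (\<lambda>(a,b). b - a) (zip xs (tl xs)))"

definition Epart :: "(real^'n^'n) set \<Rightarrow> (real^'n^'n \<Rightarrow> real^'n) \<Rightarrow> real set \<Rightarrow> real^'n \<Rightarrow> real^'n" where
  "Epart P f \<pi> u0 = (if increments \<pi> = [] then Eop P f 0 u0
                      else foldr (Eop P f) (increments \<pi>) u0)"

definition nisio :: "(real^'n^'n) set \<Rightarrow> (real^'n^'n \<Rightarrow> real^'n) \<Rightarrow> real \<Rightarrow> real^'n \<Rightarrow> real^'n" where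
  "nisio P f t u0 = (\<chi> i. SUP \<pi>\<in>partitions t. (Epart P f \<pi> u0) $ i)"

end

theory Submission
  imports Defs
begin

text \<open>
  For a Q-matrix \<open>q\<close> the matrix \<open>e\<^bsup>tq\<^esup>\<close> is positive and fixes the constant vector \<open>1\<close>,
  hence is a contraction for the sup norm. So \<open>S\<^sub>q(h)\<close> is sup-norm nonexpansive, and since
  \<open>S\<^sub>q(h) u - S\<^sub>q(h') u\<close> is the integral of \<open>e\<^bsup>rq\<^esup>(q u + f\<^sub>q)\<close> over \<open>[h', h]\<close>, it is
  Lipschitz in time with constant \<open>\<parallel>q u + f\<^sub>q\<parallel>\<^sub>\<infinity>\<close>. Both properties survive the componentwise
  supremum over \<open>q\<close>, with constant \<open>C(u) = sup\<^sub>q \<parallel>q u + f\<^sub>q\<parallel>\<^sub>\<infinity>\<close>, and then the composition along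
  a partition of \<open>[0, t]\<close> moves \<open>u\<close> by at most \<open>t C(u)\<close>. Cutting a partition of \<open>[0, t]\<close> at \<open>s\<close>,
  or extending it by a first step of length \<open>s - t\<close>, yields a partition of \<open>[0, s]\<close> whose
  composition differs by at most \<open>|t - s| C(u)\<close>; so the suprema over partitions do too.
\<close>

section \<open>The matrix exponential\<close>

text \<open>\<open>real^'n^'n\<close> carries no normed-algebra instance, so we transport matrices to the Banach
  algebra of bounded linear endomorphisms of \<open>real^'n\<close>, where the library's \<open>exp\<close> lives.\<close>

typedef (overloaded) ('n::finite) endo = "UNIV :: ((real^'n) \<Rightarrow>\<^sub>L (real^'n)) set"
  morphisms blinfun_of_endo Endo by auto

setup_lifting type_definition_endo

instantiation endo :: (finite) real_normed_vector
begin
lift_definition norm_endo :: "'a endo \<Rightarrow> real" is norm .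
lift_definition minus_endo :: "'a endo \<Rightarrow> 'a endo \<Rightarrow> 'a endo" is "(-)" .
lift_definition plus_endo :: "'a endo \<Rightarrow> 'a endo \<Rightarrow> 'a endo" is "(+)" .
lift_definition uminus_endo :: "'a endo \<Rightarrow> 'a endo" is "uminus" .
lift_definition zero_endo :: "'a endo" is "0" .
lift_definition scaleR_endo :: "real \<Rightarrow> 'a endo \<Rightarrow> 'a endo" is "scaleR" .
definition dist_endo :: "'a endo \<Rightarrow> 'a endo \<Rightarrow> real" where "dist_endo a b = norm (a - b)"
definition uniformity_endo :: "('a endo \<times> 'a endo) filter" where
  "uniformity_endo = (INF e\<in>{0 <..}. principal {(x, y). dist x y < e})"
definition open_endo :: "'a endo set \<Rightarrow> bool" where
  "open_endo S = (\<forall>x\<in>S. \<forall>\<^sub>F (x', y) in uniformity. x' = x \<longrightarrow> y \<in> S)"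
definition sgn_endo :: "'a endo \<Rightarrow> 'a endo" where "sgn_endo x = scaleR (inverse (norm x)) x"
instance
  apply standard
  unfolding dist_endo_def open_endo_def sgn_endo_def uniformity_endo_def
  apply (rule refl | (transfer, force simp: norm_triangle_ineq algebra_simps))+
  done
end

instance endo :: (finite) banach
proof
  fix X :: "nat \<Rightarrow> 'a endo"
  assume "Cauchy X"
  then have "Cauchy (\<lambda>n. blinfun_of_endo (X n))"
    unfolding Cauchy_def dist_norm by transfer
  then obtain L where "(\<lambda>n. blinfun_of_endo (X n)) \<longlonglongrightarrow> L"
    using Cauchy_convergent_iff convergent_def by blast
  then have "X \<longlonglongrightarrow> Endo L"
    unfolding tendsto_iff dist_norm by transfer (simp add: Endo_inverse)
  then show "convergent X" by (auto simp: convergent_def)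
qed

instantiation endo :: (finite) real_normed_algebra_1
begin
lift_definition times_endo :: "'a endo \<Rightarrow> 'a endo \<Rightarrow> 'a endo" is blinfun_compose .
lift_definition one_endo :: "'a endo" is id_blinfun .
instance
proof
  show "(0::'a endo) \<noteq> 1"
  proof transfer
    have "blinfun_apply (id_blinfun :: (real^'a) \<Rightarrow>\<^sub>L (real^'a)) (axis undefined 1) \<noteq> 0"
      by (simp add: axis_eq_0_iff)
    then show "(0 :: (real^'a) \<Rightarrow>\<^sub>L (real^'a)) \<noteq> id_blinfun" by (metis blinfun.zero_left)
  qed
qed (transfer; auto intro!: blinfun_eqI simp: blinfun.bilinear_simps norm_blinfun_compose)+
end

lift_definition endo_apply :: "'n::finite endo \<Rightarrow> real^'n \<Rightarrow> real^'n" is blinfun_apply .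

lemma endo_apply_times: "endo_apply (M * N) u = endo_apply M (endo_apply N u)"
  by transfer simp

lemma endo_apply_one [simp]: "endo_apply 1 u = u"
  by transfer simp

lemma endo_apply_of_real: "endo_apply (of_real c) u = c *\<^sub>R u"
  unfolding of_real_def by transfer (simp add: blinfun.bilinear_simps)

lemma endo_apply_add_left: "endo_apply (M + N) u = endo_apply M u + endo_apply N u"
  by transfer (simp add: blinfun.bilinear_simps)

lemma endo_apply_scaleR_left: "endo_apply (c *\<^sub>R M) u = c *\<^sub>R endo_apply M u"
  by transfer (simp add: blinfun.bilinear_simps)

lemma bounded_linear_endo_apply_left: "bounded_linear (\<lambda>M :: 'n::finite endo. endo_apply M u)"
proof
  show "\<exists>K. \<forall>M :: 'n endo. norm (endo_apply M u) \<le> norm M * K"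
    by (rule exI[of _ "norm u"], transfer) (simp add: norm_blinfun)
qed (simp_all add: endo_apply_add_left endo_apply_scaleR_left)

lemma linear_endo_apply: "linear (endo_apply M)"
  by transfer (simp add: blinfun.bounded_linear_right bounded_linear.linear)

lift_definition endo_of_matrix :: "real^'n^'n \<Rightarrow> 'n::finite endo" is
  "\<lambda>A. Blinfun (\<lambda>x. A *v x)" .

lemma endo_apply_endo_of_matrix [simp]: "endo_apply (endo_of_matrix A) u = A *v u"
  by transfer (simp add: bounded_linear_Blinfun_apply)

lemma endo_eqI: "(\<And>u. endo_apply M u = endo_apply N u) \<Longrightarrow> M = N"
  by transfer (rule blinfun_eqI)

lemma endo_of_matrix_add: "endo_of_matrix (A + B) = endo_of_matrix A + endo_of_matrix B"
  by (rule endo_eqI) (simp add: endo_apply_add_left matrix_vector_mult_add_rdistrib)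

lemma endo_of_matrix_mult: "endo_of_matrix (A ** B) = endo_of_matrix A * endo_of_matrix B"
  by (rule endo_eqI) (simp add: endo_apply_times matrix_vector_mul_assoc)

lemma endo_of_matrix_mat_1: "endo_of_matrix (mat 1) = 1"
  by (rule endo_eqI) simp

lemma endo_of_matrix_scaleR: "endo_of_matrix (c *\<^sub>R A) = c *\<^sub>R endo_of_matrix A"
  by (rule endo_eqI) (simp add: endo_apply_scaleR_left scaleR_matrix_vector_assoc)

lemma endo_of_matrix_mpow: "endo_of_matrix (mpow A k) = endo_of_matrix A ^ k"
  by (induction k) (simp_all add: mpow_def endo_of_matrix_mat_1 endo_of_matrix_mult)

lemma sums_vec_lambda:
  fixes f :: "nat \<Rightarrow> 'a::real_normed_vector^'n"
  assumes "\<And>i. (\<lambda>k. f k $ i) sums s $ i"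
  shows "f sums s"
  using assms unfolding sums_def by (intro vec_tendstoI) simp

lemma sums_exp_endo_of_matrix:
  "(\<lambda>k. (1 / fact k) *\<^sub>R mpow A k) sums matrix (endo_apply (exp (endo_of_matrix A)))"
proof (intro sums_vec_lambda)
  fix i j
  have "(\<lambda>k. endo_apply (endo_of_matrix A ^ k /\<^sub>R fact k) (axis j 1) $ i)
          sums (endo_apply (exp (endo_of_matrix A)) (axis j 1) $ i)"
    unfolding exp_def
    by (intro bounded_linear.sums[OF bounded_linear_compose[OF bounded_linear_vec_nth
          bounded_linear_endo_apply_left]] summable_sums summable_exp_generic)
  then show "(\<lambda>k. ((1 / fact k) *\<^sub>R mpow A k) $ i $ j)
      sums (matrix (endo_apply (exp (endo_of_matrix A))) $ i $ j)"
    by (simp add: matrix_def endo_of_matrix_mpow[symmetric] divide_inverse_commute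
        endo_apply_scaleR_left matrix_vector_mult_def axis_def if_distrib cong: if_cong)
qed

lemma mexp_sums: "(\<lambda>k. (1 / fact k) *\<^sub>R mpow A k) sums mexp A"
  using sums_exp_endo_of_matrix[of A] unfolding mexp_def by (simp add: sums_iff)

lemma mexp_eq_exp: "mexp A *v u = endo_apply (exp (endo_of_matrix A)) u"
  using sums_unique2[OF mexp_sums sums_exp_endo_of_matrix]
  by (metis matrix_vector_mul(2)[OF linear_endo_apply])

lemma endo_of_matrix_0: "endo_of_matrix 0 = 0"
  using endo_of_matrix_scaleR[of 0 0] by simp

lemma mexp_0 [simp]: "mexp 0 *v u = u"
  by (simp add: mexp_eq_exp endo_of_matrix_0)

lemma mexp_scaleR_has_vector_derivative:
  "((\<lambda>t. mexp (t *\<^sub>R A) *v u) has_vector_derivative mexp (t *\<^sub>R A) *v (A *v u)) (at t within T)"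
  using bounded_linear.has_vector_derivative[OF bounded_linear_endo_apply_left
      exp_scaleR_has_vector_derivative_right[of "endo_of_matrix A"]]
  by (simp add: mexp_eq_exp endo_of_matrix_scaleR endo_apply_times)

lemma mexp_add_scalar: "mexp (A + c *\<^sub>R mat 1) *v u = exp c *\<^sub>R (mexp A *v u)"
proof -
  have "endo_of_matrix (A + c *\<^sub>R mat 1) = of_real c + endo_of_matrix A"
    by (simp add: endo_of_matrix_add endo_of_matrix_scaleR endo_of_matrix_mat_1 of_real_def)
  moreover have "exp (of_real c + endo_of_matrix A) = exp (of_real c) * exp (endo_of_matrix A)"
    by (rule exp_add_commuting) (simp add: of_real_def)
  ultimately show ?thesis
    by (simp add: mexp_eq_exp exp_of_real endo_apply_times endo_apply_of_real)
qed

lemma mpow_nonneg: "(\<And>i j. 0 \<le> A $ i $ j) \<Longrightarrow> 0 \<le> mpow A k $ i $ j"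
  by (induction k arbitrary: i j)
    (auto simp: mpow_def mat_def matrix_matrix_mult_def intro!: sum_nonneg mult_nonneg_nonneg)

lemma mexp_nonneg:
  assumes "\<And>i j. 0 \<le> A $ i $ j" and "\<And>j. 0 \<le> u $ j"
  shows "0 \<le> (mexp A *v u) $ i"
proof -
  have "0 \<le> mexp A $ i $ j" for j
    by (rule sums_le[OF _ sums_zero sums_vec_nth[OF sums_vec_nth[OF mexp_sums]]])
      (simp add: mpow_nonneg assms(1))
  then show ?thesis
    by (auto simp: matrix_vector_mult_def intro!: sum_nonneg mult_nonneg_nonneg assms(2))
qed

section \<open>Transition matrices of Q-matrices\<close>

lemma infnorm_le_cart: "(\<And>i. \<bar>x $ i\<bar> \<le> B) \<Longrightarrow> infnorm (x :: real^'n) \<le> B"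
  unfolding infnorm_cart by (rule cSup_least) auto

lemma Q_matrix_vector_1: "is_Q_matrix q \<Longrightarrow> q *v 1 = 0"
  by (simp add: is_Q_matrix_def matrix_vector_mult_def vec_eq_iff)

lemma mexp_Q_nonneg:
  assumes q: "is_Q_matrix q" and "0 \<le> t" and u: "\<And>j. 0 \<le> u $ j"
  shows "0 \<le> (mexp (t *\<^sub>R q) *v u) $ i"
proof -
  define c where "c = (\<Sum>k\<in>UNIV. \<bar>q $ k $ k\<bar>)"
  have shift_nonneg: "0 \<le> (q + c *\<^sub>R mat 1) $ i $ j" for i j
  proof (cases "i = j")
    case True
    have "\<bar>q $ i $ i\<bar> \<le> c" unfolding c_def by (rule member_le_sum) auto
    then show ?thesis using True by (simp add: mat_def)
  next
    case False
    then show ?thesis using q by (simp add: mat_def is_Q_matrix_def)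
  qed
  have shifted_nonneg: "0 \<le> (t *\<^sub>R q + (t * c) *\<^sub>R mat 1) $ i $ j" for i j
    using mult_nonneg_nonneg[OF \<open>0 \<le> t\<close> shift_nonneg[of i j]] by (simp add: algebra_simps)
  have "mexp (t *\<^sub>R q) *v u = exp (- (t * c)) *\<^sub>R (mexp (t *\<^sub>R q + (t * c) *\<^sub>R mat 1) *v u)"
    using mexp_add_scalar[of "t *\<^sub>R q + (t * c) *\<^sub>R mat 1" "- (t * c)" u] by simp
  then show ?thesis by (simp add: mexp_nonneg[OF shifted_nonneg u])
qed

lemma mexp_Q_1:
  assumes "is_Q_matrix q"
  shows "mexp (t *\<^sub>R q) *v 1 = 1"
proof -
  have "\<exists>c. \<forall>t\<in>UNIV. mexp (t *\<^sub>R q) *v 1 = c"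
  proof (rule has_derivative_zero_constant)
    show "((\<lambda>t. mexp (t *\<^sub>R q) *v 1) has_derivative (\<lambda>h. 0)) (at s within UNIV)" for s
      using mexp_scaleR_has_vector_derivative[of q 1 s]
      by (simp add: has_vector_derivative_def Q_matrix_vector_1[OF assms])
  qed simp
  then show ?thesis by (metis UNIV_I mexp_0 scaleR_zero_left)
qed

lemma infnorm_mexp_Q_le:
  assumes q: "is_Q_matrix q" and "0 \<le> t"
  shows "infnorm (mexp (t *\<^sub>R q) *v w) \<le> infnorm w"
proof (rule infnorm_le_cart)
  fix i
  let ?B = "infnorm w"
  have "0 \<le> (?B *\<^sub>R 1 - w) $ j" "0 \<le> (?B *\<^sub>R 1 + w) $ j" for j
    using component_le_infnorm_cart[of w j] by (simp_all add: abs_le_iff)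
  then have "0 \<le> (mexp (t *\<^sub>R q) *v (?B *\<^sub>R 1 - w)) $ i"
    and "0 \<le> (mexp (t *\<^sub>R q) *v (?B *\<^sub>R 1 + w)) $ i"
    by (blast intro: mexp_Q_nonneg[OF q \<open>0 \<le> t\<close>])+
  then show "\<bar>(mexp (t *\<^sub>R q) *v w) $ i\<bar> \<le> ?B"
    by (simp add: matrix_vector_mult_diff_distrib matrix_vector_right_distrib
        matrix_vector_mult_scaleR mexp_Q_1[OF q] abs_le_iff)
qed

section \<open>The solution operators\<close>

lemma infnorm_has_integral_le:
  fixes g :: "real \<Rightarrow> real^'n"
  assumes g: "(g has_integral I) {b..a}" and "b \<le> a"
    and bound: "\<And>r. r \<in> {b..a} \<Longrightarrow> infnorm (g r) \<le> B"
  shows "infnorm I \<le> (a - b) * B"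
proof (rule infnorm_le_cart)
  fix i
  have "((\<lambda>r. g r $ i) has_integral I $ i) (cbox b a)"
    using has_integral_linear[OF g bounded_linear_vec_nth[of i]] by (simp add: o_def)
  moreover have "norm (g r $ i) \<le> B" if "r \<in> cbox b a" for r
    using component_le_infnorm_cart[of "g r" i] bound[of r] that by simp
  moreover have "0 \<le> B"
    using bound[of a] infnorm_pos_le[of "g a"] \<open>b \<le> a\<close> by simp
  ultimately have "norm (I $ i) \<le> B * measure lborel (cbox b a)"
    by (intro has_integral_bound)
  then show "\<bar>I $ i\<bar> \<le> (a - b) * B"
    using \<open>b \<le> a\<close> by (simp add: mult.commute)
qed

lemma Ssol_0 [simp]: "Ssol q fq 0 u = u"
  by (simp add: Ssol_def)

lemma infnorm_Ssol_diff_le: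
  assumes "is_Q_matrix q" and "0 \<le> h"
  shows "infnorm (Ssol q fq h u - Ssol q fq h v) \<le> infnorm (u - v)"
  using infnorm_mexp_Q_le[OF assms, of "u - v"]
  by (simp add: Ssol_def matrix_vector_mult_diff_distrib)

lemma Ssol_diff_has_integral:
  assumes "0 \<le> b" and "b \<le> a"
  shows "((\<lambda>r. mexp (r *\<^sub>R q) *v (q *v u + fq)) has_integral Ssol q fq a u - Ssol q fq b u) {b..a}"
proof -
  let ?g = "\<lambda>r. mexp (r *\<^sub>R q) *v u" and ?h = "\<lambda>r. mexp (r *\<^sub>R q) *v fq"
  have ftc: "((\<lambda>r. mexp (r *\<^sub>R q) *v (q *v u)) has_integral ?g a - ?g b) {b..a}"
    using \<open>b \<le> a\<close>
    by (intro fundamental_theorem_of_calculus) (auto intro: mexp_scaleR_has_vector_derivative)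
  have "continuous_on {0..a} ?h"
    by (intro continuous_at_imp_continuous_on ballI
        has_vector_derivative_continuous[OF mexp_scaleR_has_vector_derivative])
  then have h_int: "?h integrable_on {0..a}"
    by (rule integrable_continuous_interval)
  have "integral {0..b} ?h + integral {b..a} ?h = integral {0..a} ?h"
    using assms h_int by (rule Henstock_Kurzweil_Integration.integral_combine)
  then have "Ssol q fq a u - Ssol q fq b u = (?g a - ?g b) + integral {b..a} ?h"
    by (simp add: Ssol_def algebra_simps)
  moreover have "(?h has_integral integral {b..a} ?h) {b..a}"
    using h_int assms by (intro integrable_integral integrable_subinterval_real[OF h_int]) auto
  ultimately show ?thesis
    using has_integral_add[OF ftc] by (simp add: matrix_vector_right_distrib)
qed

lemma infnorm_Ssol_time_le:
  assumes q: "is_Q_matrix q" and "0 \<le> a" and "0 \<le> b"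
  shows "infnorm (Ssol q fq a u - Ssol q fq b u) \<le> \<bar>a - b\<bar> * infnorm (q *v u + fq)"
proof -
  have ordered: "infnorm (Ssol q fq a u - Ssol q fq b u) \<le> (a - b) * infnorm (q *v u + fq)"
    if "0 \<le> b" "b \<le> a" for a b
    using that by (intro infnorm_has_integral_le[OF Ssol_diff_has_integral] infnorm_mexp_Q_le[OF q]) auto
  show ?thesis
    using ordered[of b a] ordered[of a b] assms by (cases "b \<le> a") (simp_all add: infnorm_sub)
qed

section \<open>Componentwise suprema\<close>

lemma cSUP_le_cSUP_add:
  fixes F :: "'a \<Rightarrow> real" and G :: "'b \<Rightarrow> real"
  assumes "A \<noteq> {}" and "bdd_above (G ` B)" and "\<And>x. x \<in> A \<Longrightarrow> \<exists>y\<in>B. F x \<le> G y + c"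
  shows "(SUP x\<in>A. F x) \<le> (SUP y\<in>B. G y) + c"
proof (rule cSUP_least[OF assms(1)])
  fix x assume "x \<in> A"
  then obtain y where "y \<in> B" "F x \<le> G y + c" using assms(3) by blast
  then show "F x \<le> (SUP y\<in>B. G y) + c"
    using cSUP_upper[OF \<open>y \<in> B\<close> assms(2)] by linarith
qed

lemma infnorm_SUP_diff_le:
  fixes F :: "'a \<Rightarrow> real^'n" and G :: "'b \<Rightarrow> real^'n"
  assumes "A \<noteq> {}" and "B \<noteq> {}" and G_bdd: "\<And>i. bdd_above ((\<lambda>y. G y $ i) ` B)"
    and FG: "\<And>x. x \<in> A \<Longrightarrow> \<exists>y\<in>B. infnorm (F x - G y) \<le> c"
    and GF: "\<And>y. y \<in> B \<Longrightarrow> \<exists>x\<in>A. infnorm (F x - G y) \<le> c"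
  shows "infnorm ((\<chi> i. SUP x\<in>A. F x $ i) - (\<chi> i. SUP y\<in>B. G y $ i)) \<le> c"
proof (rule infnorm_le_cart)
  fix i
  have FG_i: "\<exists>y\<in>B. F x $ i \<le> G y $ i + c" if x: "x \<in> A" for x
  proof -
    obtain y where "y \<in> B" "infnorm (F x - G y) \<le> c" using FG[OF x] by blast
    then show ?thesis using component_le_infnorm_cart[of "F x - G y" i] by force
  qed
  have GF_i: "\<exists>x\<in>A. G y $ i \<le> F x $ i + c" if y: "y \<in> B" for y
  proof -
    obtain x where "x \<in> A" "infnorm (F x - G y) \<le> c" using GF[OF y] by blast
    then show ?thesis using component_le_infnorm_cart[of "F x - G y" i] by force
  qed
  obtain M where "\<And>y. y \<in> B \<Longrightarrow> G y $ i \<le> M"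
    using G_bdd[of i] by (auto simp: bdd_above_def)
  then have F_bdd: "bdd_above ((\<lambda>x. F x $ i) ` A)"
    using FG_i by (intro bdd_aboveI[of _ "M + c"]) force
  have "(SUP x\<in>A. F x $ i) \<le> (SUP y\<in>B. G y $ i) + c"
    by (rule cSUP_le_cSUP_add[OF \<open>A \<noteq> {}\<close> G_bdd FG_i])
  moreover have "(SUP y\<in>B. G y $ i) \<le> (SUP x\<in>A. F x $ i) + c"
    by (rule cSUP_le_cSUP_add[OF \<open>B \<noteq> {}\<close> F_bdd GF_i])
  ultimately show "\<bar>((\<chi> i. SUP x\<in>A. F x $ i) - (\<chi> i. SUP y\<in>B. G y $ i)) $ i\<bar> \<le> c"
    by (simp add: abs_le_iff)
qed

lemma bdd_above_component_if_infnorm_le: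
  fixes F :: "'a \<Rightarrow> real^'n"
  assumes "\<And>x. x \<in> A \<Longrightarrow> infnorm (F x - v) \<le> c"
  shows "bdd_above ((\<lambda>x. F x $ i) ` A)"
proof (rule bdd_aboveI)
  fix r assume "r \<in> (\<lambda>x. F x $ i) ` A"
  then obtain x where "x \<in> A" "r = F x $ i" by blast
  then show "r \<le> v $ i + c"
    using assms[of x] component_le_infnorm_cart[of "F x - v" i] by simp
qed

section \<open>Partitions and their increments\<close>

definition list_increments :: "real list \<Rightarrow> real list" where
  "list_increments xs = map (\<lambda>(a, b). b - a) (zip xs (tl xs))"

lemma list_increments_simps [simp]:
  "list_increments [] = []"
  "list_increments [x] = []"
  "list_increments (x # y # zs) = (y - x) # list_increments (y # zs)"
  by (simp_all add: list_increments_def)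

lemma increments_eq_list_increments: "increments \<pi> = list_increments (sorted_list_of_set \<pi>)"
  by (simp add: increments_def list_increments_def Let_def)

lemma sum_list_increments:
  "sorted_wrt (<) (x # ys) \<Longrightarrow> sum_list (list_increments (x # ys)) = Max (set (x # ys)) - x"
proof (induction ys arbitrary: x)
  case (Cons y zs)
  then have "x \<le> Max (set (y # zs))"
    by (meson Max_ge finite_set less_imp_le list.set_intros(1) order.trans sorted_wrt.simps(2))
  then have "Max (set (x # y # zs)) = Max (set (y # zs))"
    by (simp add: max_def del: Max_ge_iff)
  with Cons show ?case by simp
qed simp

lemma list_increments_pos: "sorted_wrt (<) xs \<Longrightarrow> \<forall>h\<in>set (list_increments xs). 0 < h"
  by (induction xs rule: induct_list012) auto

fun partial_sums :: "real \<Rightarrow> real list \<Rightarrow> real list" where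
  "partial_sums a [] = [a]"
| "partial_sums a (h # hs) = a # partial_sums (a + h) hs"

lemma partial_sums_Cons: "\<exists>r. partial_sums a hs = a # r"
  by (cases hs) auto

lemma partial_sums_ge: "\<forall>h\<in>set hs. 0 \<le> h \<Longrightarrow> y \<in> set (partial_sums a hs) \<Longrightarrow> a \<le> y"
proof (induction hs arbitrary: a)
  case (Cons h hs)
  then show ?case by (cases "y = a") (force dest: Cons.IH[of "a + h"])+
qed simp

lemma partial_sums_sorted: "\<forall>h\<in>set hs. 0 < h \<Longrightarrow> sorted_wrt (<) (partial_sums a hs)"
proof (induction hs arbitrary: a)
  case (Cons h hs)
  have "a < y" if "y \<in> set (partial_sums (a + h) hs)" for y
    using partial_sums_ge[OF _ that] Cons.prems by fastforce
  with Cons show ?case by simp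
qed simp

lemma Max_partial_sums: "\<forall>h\<in>set hs. 0 < h \<Longrightarrow> Max (set (partial_sums a hs)) = a + sum_list hs"
proof (induction hs arbitrary: a)
  case (Cons h hs)
  have "0 \<le> sum_list hs"
    using Cons.prems by (intro sum_list_nonneg) auto
  moreover have "Max (set (partial_sums a (h # hs))) = max a (Max (set (partial_sums (a + h) hs)))"
    using partial_sums_Cons[of "a + h" hs] by (auto simp: Max_insert)
  ultimately show ?case using Cons by simp
qed simp

lemma list_increments_partial_sums: "list_increments (partial_sums a hs) = hs"
proof (induction hs arbitrary: a)
  case (Cons h hs)
  obtain r where "partial_sums (a + h) hs = (a + h) # r" using partial_sums_Cons by blast
  with Cons show ?case by (metis add_diff_cancel_left' list_increments_simps(3) partial_sums.simps(2))
qed simp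

lemma increments_partition:
  assumes "\<pi> \<in> partitions t"
  shows "\<forall>h\<in>set (increments \<pi>). 0 < h" and "sum_list (increments \<pi>) = t"
proof -
  have fin: "finite \<pi>" and "\<pi> \<subseteq> {0..}" "0 \<in> \<pi>" "Max \<pi> = t"
    using assms by (auto simp: partitions_def)
  then have "Min \<pi> = 0" by (intro Min_eqI) auto
  then have xs: "sorted_list_of_set \<pi> = 0 # sorted_list_of_set (\<pi> - {0})"
    using sorted_list_of_set_nonempty[OF fin] \<open>0 \<in> \<pi>\<close> by auto
  have strict: "sorted_wrt (<) (sorted_list_of_set \<pi>)" by simp
  then show "\<forall>h\<in>set (increments \<pi>). 0 < h"
    unfolding increments_eq_list_increments by (rule list_increments_pos)
  have "sum_list (list_increments (sorted_list_of_set \<pi>))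
      = Max (set (sorted_list_of_set \<pi>)) - 0"
    using sum_list_increments[of 0 "sorted_list_of_set (\<pi> - {0})"] strict xs by simp
  then show "sum_list (increments \<pi>) = t"
    using fin \<open>Max \<pi> = t\<close> by (simp add: increments_eq_list_increments)
qed

lemma partition_with_increments:
  assumes "\<forall>h\<in>set hs. 0 < h"
  shows "\<exists>\<pi>\<in>partitions (sum_list hs). increments \<pi> = hs"
proof
  let ?\<pi> = "set (partial_sums 0 hs)"
  have "sorted_wrt (<) (partial_sums 0 hs)"
    by (rule partial_sums_sorted[OF assms])
  then have "sorted_list_of_set ?\<pi> = partial_sums 0 hs"
    by (simp add: sorted_list_of_set_sort_remdups strict_sorted_iff distinct_remdups_id sorted_sort_id)
  then show "increments ?\<pi> = hs"
    by (simp add: increments_eq_list_increments list_increments_partial_sums)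
  have "?\<pi> \<subseteq> {0..}"
    using partial_sums_ge[where a=0] assms by fastforce
  moreover have "0 \<in> ?\<pi>"
    using partial_sums_Cons[of 0 hs] by force
  ultimately show "?\<pi> \<in> partitions (sum_list hs)"
    using Max_partial_sums[OF assms, of 0] by (simp add: partitions_def)
qed

lemma partitions_nonempty: "0 \<le> t \<Longrightarrow> partitions t \<noteq> {}"
  using partition_with_increments[of "if t = 0 then [] else [t]"] by (cases "t = 0") auto

lemma increments_partitions_0: "\<pi> \<in> partitions 0 \<Longrightarrow> increments \<pi> = []"
  using increments_partition[of \<pi> 0] sum_list_nonneg_eq_0_iff[of "increments \<pi>"]
  by (metis less_imp_le less_irrefl last_in_set)

section \<open>The Nisio semigroup\<close>

lemma supnorm_eq_infnorm: "supnorm x = infnorm x"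
  unfolding supnorm_def infnorm_cart by (simp add: cSup_eq_Max full_SetCompr_eq)

lemma bdd_above_infnorm_generator:
  fixes P :: "(real^'n::finite^'n) set" and f :: "real^'n^'n \<Rightarrow> real^'n"
  assumes bdd: "\<And>u i. bdd_above ((\<lambda>q. (q *v u + f q) $ i) ` P)"
    and f_bdd: "bdd_above ((\<lambda>q. infnorm (f q)) ` P)"
  shows "bdd_above ((\<lambda>q. infnorm (q *v u + f q)) ` P)"
proof -
  obtain F where F: "\<And>q. q \<in> P \<Longrightarrow> infnorm (f q) \<le> F"
    using f_bdd by (auto simp: bdd_above_def)
  have "\<forall>i. \<exists>b. \<forall>q\<in>P. (q *v v + f q) $ i \<le> b" for v
    using bdd[of v] by (auto simp: bdd_above_def)
  then obtain b c where b: "\<And>i q. q \<in> P \<Longrightarrow> (q *v u + f q) $ i \<le> b i"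
    and c: "\<And>i q. q \<in> P \<Longrightarrow> (q *v (- u) + f q) $ i \<le> c i"
    by metis
  let ?K = "(\<Sum>i\<in>UNIV. \<bar>b i\<bar> + \<bar>c i\<bar>) + 2 * F"
  have "infnorm (q *v u + f q) \<le> ?K" if "q \<in> P" for q
  proof (rule infnorm_le_cart)
    fix i
    have "\<bar>f q $ i\<bar> \<le> F"
      using component_le_infnorm_cart[of "f q" i] F[OF that] by linarith
    \<comment> \<open>the lower bound comes from the upper bound at \<open>- u\<close>\<close>
    moreover have "(q *v (- u)) $ i = - (q *v u) $ i"
      by (simp add: matrix_vector_mult_def sum_negf)
    moreover have "\<bar>b i\<bar> + \<bar>c i\<bar> \<le> (\<Sum>i\<in>UNIV. \<bar>b i\<bar> + \<bar>c i\<bar>)"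
      by (rule member_le_sum) auto
    ultimately show "\<bar>(q *v u + f q) $ i\<bar> \<le> ?K"
      using b[OF that, of i] c[OF that, of i] by (smt (verit) vector_add_component)
  qed
  then show ?thesis by (auto intro!: bdd_aboveI[of _ ?K])
qed

locale nisio_setting =
  fixes P :: "(real^'n::finite^'n) set" and f :: "real^'n^'n \<Rightarrow> real^'n"
  assumes Q_matrix: "\<And>q. q \<in> P \<Longrightarrow> is_Q_matrix q"
    and nonempty: "P \<noteq> {}"
    and bdd_generator: "\<And>u. bdd_above ((\<lambda>q. infnorm (q *v u + f q)) ` P)"
begin

definition gen_norm :: "real^'n \<Rightarrow> real" where
  "gen_norm u = (SUP q\<in>P. infnorm (q *v u + f q))"

lemma gen_norm_ge: "q \<in> P \<Longrightarrow> infnorm (q *v u + f q) \<le> gen_norm u"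
  unfolding gen_norm_def by (rule cSUP_upper[OF _ bdd_generator])

lemma gen_norm_nonneg: "0 \<le> gen_norm u"
  using nonempty gen_norm_ge infnorm_pos_le order_trans by blast

lemma infnorm_Ssol_time_le_gen_norm:
  "q \<in> P \<Longrightarrow> 0 \<le> a \<Longrightarrow> 0 \<le> b \<Longrightarrow>
    infnorm (Ssol q (f q) a u - Ssol q (f q) b u) \<le> \<bar>a - b\<bar> * gen_norm u"
  using infnorm_Ssol_time_le[OF Q_matrix] gen_norm_ge
  by (meson abs_ge_zero mult_left_mono order_trans)

lemma bdd_above_Ssol_component:
  assumes "0 \<le> h"
  shows "bdd_above ((\<lambda>q. Ssol q (f q) h u $ i) ` P)"
proof (rule bdd_above_component_if_infnorm_le)
  show "infnorm (Ssol q (f q) h u - u) \<le> h * gen_norm u" if "q \<in> P" for q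
    using infnorm_Ssol_time_le_gen_norm[OF that assms order_refl, of u] assms by simp
qed

lemma Eop_0: "Eop P f 0 u = u"
  by (simp add: Eop_def nonempty vec_eq_iff)

lemma infnorm_Eop_diff_le: "0 \<le> h \<Longrightarrow> infnorm (Eop P f h u - Eop P f h v) \<le> infnorm (u - v)"
  unfolding Eop_def
  by (intro infnorm_SUP_diff_le nonempty bdd_above_Ssol_component)
    (auto intro: infnorm_Ssol_diff_le Q_matrix)

lemma infnorm_Eop_time_le:
  "0 \<le> a \<Longrightarrow> 0 \<le> b \<Longrightarrow> infnorm (Eop P f a u - Eop P f b u) \<le> \<bar>a - b\<bar> * gen_norm u"
  unfolding Eop_def
  by (intro infnorm_SUP_diff_le nonempty bdd_above_Ssol_component)
    (auto intro: infnorm_Ssol_time_le_gen_norm)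

lemma infnorm_foldr_Eop_diff_le:
  "\<forall>h\<in>set hs. 0 \<le> h \<Longrightarrow> infnorm (foldr (Eop P f) hs u - foldr (Eop P f) hs v) \<le> infnorm (u - v)"
  by (induction hs) (auto intro: order_trans[OF infnorm_Eop_diff_le])

lemma infnorm_foldr_Eop_le:
  "\<forall>h\<in>set hs. 0 \<le> h \<Longrightarrow> infnorm (foldr (Eop P f) hs u - u) \<le> sum_list hs * gen_norm u"
proof (induction hs)
  case (Cons h hs)
  let ?w = "foldr (Eop P f) hs u"
  have "infnorm (Eop P f h ?w - u)
      \<le> infnorm (Eop P f h ?w - Eop P f h u) + infnorm (Eop P f h u - Eop P f 0 u)"
    using infnorm_triangle[of "Eop P f h ?w - Eop P f h u" "Eop P f h u - u"] by (simp add: Eop_0)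
  also have "\<dots> \<le> sum_list hs * gen_norm u + h * gen_norm u"
    using Cons infnorm_Eop_diff_le[of h ?w u] infnorm_Eop_time_le[of h 0 u] by force
  finally show ?case by (simp add: algebra_simps)
qed (simp add: infnorm_0)

lemma foldr_Eop_filter_nonzero: "foldr (Eop P f) (filter (\<lambda>h. h \<noteq> 0) hs) u = foldr (Eop P f) hs u"
  by (induction hs) (simp_all add: Eop_0)

lemma foldr_Eop_shorten:
  assumes "\<forall>h\<in>set hs. 0 \<le> h" and "0 \<le> s" and "s \<le> sum_list hs"
  shows "\<exists>hs'. (\<forall>h\<in>set hs'. 0 \<le> h) \<and> sum_list hs' = s \<and>
    infnorm (foldr (Eop P f) hs u - foldr (Eop P f) hs' u) \<le> (sum_list hs - s) * gen_norm u"
  using assms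
proof (induction hs arbitrary: s)
  case (Cons h hs)
  let ?w = "foldr (Eop P f) hs u"
  show ?case
  proof (cases "s \<le> h")
    case True
    have "infnorm (Eop P f h ?w - Eop P f s u)
        \<le> infnorm (Eop P f h ?w - Eop P f h u) + infnorm (Eop P f h u - Eop P f s u)"
      using infnorm_triangle[of "Eop P f h ?w - Eop P f h u" "Eop P f h u - Eop P f s u"] by simp
    also have "\<dots> \<le> sum_list hs * gen_norm u + (h - s) * gen_norm u"
      using Cons.prems True infnorm_Eop_diff_le[of h ?w u] infnorm_foldr_Eop_le[of hs u]
        infnorm_Eop_time_le[of h s u] by (intro add_mono) auto
    finally show ?thesis
      using Cons.prems by (intro exI[of _ "[s]"]) (simp add: algebra_simps)
  next
    case False
    with Cons.prems obtain hs' where "\<forall>h\<in>set hs'. 0 \<le> h" "sum_list hs' = s - h"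
      and close: "infnorm (?w - foldr (Eop P f) hs' u) \<le> (sum_list hs - (s - h)) * gen_norm u"
      using Cons.IH[of "s - h"] by auto
    moreover have "infnorm (Eop P f h ?w - Eop P f h (foldr (Eop P f) hs' u))
        \<le> (sum_list hs - (s - h)) * gen_norm u"
      using Cons.prems infnorm_Eop_diff_le[of h ?w "foldr (Eop P f) hs' u"] close by simp
    ultimately show ?thesis
      using Cons.prems by (intro exI[of _ "h # hs'"]) (simp add: algebra_simps)
  qed
qed (rule exI[of _ "[]"], simp add: infnorm_0)

lemma foldr_Eop_change_time:
  assumes "\<forall>h\<in>set hs. 0 \<le> h" and "0 \<le> s"
  shows "\<exists>hs'. (\<forall>h\<in>set hs'. 0 < h) \<and> sum_list hs' = s \<and>
    infnorm (foldr (Eop P f) hs u - foldr (Eop P f) hs' u) \<le> \<bar>sum_list hs - s\<bar> * gen_norm u"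
proof -
  obtain hs' where hs': "\<forall>h\<in>set hs'. 0 \<le> h" "sum_list hs' = s"
    "infnorm (foldr (Eop P f) hs u - foldr (Eop P f) hs' u) \<le> \<bar>sum_list hs - s\<bar> * gen_norm u"
  proof (cases "s \<le> sum_list hs")
    case True
    then show ?thesis using foldr_Eop_shorten[OF assms True, of u] that by force
  next
    case False
    \<comment> \<open>lengthen by a final step \<open>s - sum_list hs\<close>, which acts first on \<open>u\<close>\<close>
    let ?c = "s - sum_list hs"
    have "infnorm (foldr (Eop P f) hs u - foldr (Eop P f) hs (Eop P f ?c u)) \<le> ?c * gen_norm u"
      using False infnorm_foldr_Eop_diff_le[OF assms(1), of u "Eop P f ?c u"]
        infnorm_Eop_time_le[of 0 ?c u] by (simp add: Eop_0 infnorm_sub)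
    then show ?thesis
      using False assms by (intro that[of "hs @ [?c]"]) auto
  qed
  have "sum_list (filter (\<lambda>h. h \<noteq> 0) hs') = sum_list hs'"
    by (induction hs') auto
  then show ?thesis
    using hs' by (intro exI[of _ "filter (\<lambda>h. h \<noteq> 0) hs'"]) (auto simp: foldr_Eop_filter_nonzero)
qed

lemma Epart_eq_foldr: "Epart P f \<pi> u = foldr (Eop P f) (increments \<pi>) u"
  by (simp add: Epart_def Eop_0)

lemma infnorm_Epart_le:
  assumes "\<pi> \<in> partitions t"
  shows "infnorm (Epart P f \<pi> u - u) \<le> t * gen_norm u"
proof -
  have "\<forall>h\<in>set (increments \<pi>). 0 \<le> h"
    using increments_partition(1)[OF assms] by auto
  then show ?thesis
    using infnorm_foldr_Eop_le[of "increments \<pi>" u] increments_partition(2)[OF assms]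
    by (simp add: Epart_eq_foldr)
qed

lemma Epart_match:
  assumes "\<pi> \<in> partitions t" and "0 \<le> s"
  shows "\<exists>\<pi>'\<in>partitions s. infnorm (Epart P f \<pi> u - Epart P f \<pi>' u) \<le> \<bar>t - s\<bar> * gen_norm u"
proof -
  have "\<forall>h\<in>set (increments \<pi>). 0 \<le> h"
    using increments_partition(1)[OF assms(1)] by auto
  then obtain hs where "\<forall>h\<in>set hs. 0 < h" and "sum_list hs = s"
    and close: "infnorm (Epart P f \<pi> u - foldr (Eop P f) hs u) \<le> \<bar>t - s\<bar> * gen_norm u"
    using foldr_Eop_change_time[OF _ assms(2)] increments_partition(2)[OF assms(1)]
    by (metis Epart_eq_foldr)
  moreover obtain \<pi>' where "\<pi>' \<in> partitions (sum_list hs)" "increments \<pi>' = hs"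
    using partition_with_increments[OF \<open>\<forall>h\<in>set hs. 0 < h\<close>] by blast
  ultimately show ?thesis by (metis Epart_eq_foldr)
qed

lemma nisio_0: "nisio P f 0 u = u"
proof -
  have "Epart P f \<pi> u = u" if "\<pi> \<in> partitions 0" for \<pi>
    using increments_partitions_0[OF that] by (simp add: Epart_eq_foldr)
  then show ?thesis
    using partitions_nonempty[of 0] by (simp add: nisio_def vec_eq_iff cong: SUP_cong)
qed

lemma infnorm_nisio_diff_le:
  assumes "0 \<le> s" and "0 \<le> t"
  shows "infnorm (nisio P f t u - nisio P f s u) \<le> \<bar>t - s\<bar> * gen_norm u"
  unfolding nisio_def
proof (rule infnorm_SUP_diff_le[OF partitions_nonempty[OF assms(2)]
      partitions_nonempty[OF assms(1)]])
  show "bdd_above ((\<lambda>\<pi>. Epart P f \<pi> u $ i) ` partitions s)" for i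
    by (rule bdd_above_component_if_infnorm_le) (rule infnorm_Epart_le)
  show "\<exists>\<pi>'\<in>partitions s. infnorm (Epart P f \<pi> u - Epart P f \<pi>' u) \<le> \<bar>t - s\<bar> * gen_norm u"
    if "\<pi> \<in> partitions t" for \<pi>
    using Epart_match[OF that assms(1)] .
  show "\<exists>\<pi>\<in>partitions t. infnorm (Epart P f \<pi> u - Epart P f \<pi>' u) \<le> \<bar>t - s\<bar> * gen_norm u"
    if "\<pi>' \<in> partitions s" for \<pi>'
    using Epart_match[OF that assms(2)] by (metis abs_minus_commute infnorm_sub)
qed

lemma nisio_lipschitz_on: "(sqrt CARD('n) * gen_norm u)-lipschitz_on {0..} (\<lambda>t. nisio P f t u)"
proof (rule lipschitz_onI)
  fix s t :: real
  assume "s \<in> {0..}" "t \<in> {0..}"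
  have "dist (nisio P f s u) (nisio P f t u)
      \<le> sqrt CARD('n) * infnorm (nisio P f s u - nisio P f t u)"
    using norm_le_infnorm[of "nisio P f s u - nisio P f t u"] by (simp add: dist_norm)
  also have "\<dots> \<le> sqrt CARD('n) * (\<bar>s - t\<bar> * gen_norm u)"
    using \<open>s \<in> {0..}\<close> \<open>t \<in> {0..}\<close> by (intro mult_left_mono infnorm_nisio_diff_le) auto
  finally show "dist (nisio P f s u) (nisio P f t u) \<le> sqrt CARD('n) * gen_norm u * dist s t"
    by (simp add: dist_real_def mult_ac)
qed (simp add: gen_norm_nonneg)

end

theorem mainTheorem4:
  fixes P :: "(real^'n^'n) set" and f :: "real^'n^'n \<Rightarrow> real^'n" and q0 :: "real^'n^'n"
  assumes Q: "\<forall>q\<in>P. is_Q_matrix q"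
    and q0: "q0 \<in> P" "f q0 = 0"
    and fle: "\<forall>q\<in>P. \<forall>i. f q $ i \<le> 0"
    and Qfin: "\<forall>u i. bdd_above ((\<lambda>q. (q *v u + f q) $ i) ` P)"
    and fbdd: "bdd_above ((\<lambda>q. supnorm (f q)) ` P)"
  shows "(\<forall>t u0. t \<ge> 0 \<longrightarrow>
            supnorm (nisio P f t u0 - u0) \<le> t * (SUP q\<in>P. supnorm (q *v u0 + f q)))
       \<and> (\<forall>s t u0. s \<ge> 0 \<longrightarrow> t \<ge> 0 \<longrightarrow>
            supnorm (nisio P f t u0 - nisio P f s u0) \<le> \<bar>t - s\<bar> * (SUP q\<in>P. supnorm (q *v u0 + f q)))
       \<and> (\<forall>u0. \<exists>L. L-lipschitz_on {0..} (\<lambda>t. nisio P f t u0))"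
proof -
  interpret nisio_setting P f
  proof
    show "\<And>q. q \<in> P \<Longrightarrow> is_Q_matrix q" and "P \<noteq> {}"
      using Q q0(1) by auto
    show "bdd_above ((\<lambda>q. infnorm (q *v u + f q)) ` P)" for u
      using Qfin fbdd by (intro bdd_above_infnorm_generator) (auto simp: supnorm_eq_infnorm)
  qed
  have "(SUP q\<in>P. supnorm (q *v u + f q)) = gen_norm u" for u
    by (simp add: gen_norm_def supnorm_eq_infnorm)
  then have time_lipschitz: "supnorm (nisio P f t u - nisio P f s u)
      \<le> \<bar>t - s\<bar> * (SUP q\<in>P. supnorm (q *v u + f q))" if "0 \<le> s" "0 \<le> t" for s t u
    using infnorm_nisio_diff_le[OF that] by (simp add: supnorm_eq_infnorm)
  moreover have "\<exists>L. L-lipschitz_on {0..} (\<lambda>t. nisio P f t u)" for u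
    using nisio_lipschitz_on by blast
  ultimately show ?thesis
    using time_lipschitz[of 0] nisio_0 by auto
qed

end
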